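(* Let $N\ge3$ be an integer, $(N+2)/(N-2)<p<p_{JL}$ and $\lambda>0$, and let $u_*$ be the unique radial singular solution of $u''+\frac{N-1}{r}u'+\lambda u+|u|^{p-1}u=0$. Then there exists $r_*>0$ such that $u_*(r_* )=0$ and $u_*(r)>0$ for $0<r<r_*$.
   Context: It is known (Merle–Peletier) that the equation has a unique solution $u_*$ near $r=0$ satisfying $u_*(r)=A r^{-2/(p-1)}(1+o(1))$ as $r\to0^+$, where $A=\left[\frac{2}{p-1}\left(N-2-\frac{2}{p-1}\right)\right]^{1/(p-1)}$; it is called the singular solution. The Joseph–Lundgren exponent is $p_{JL}=1+\frac{4}{N-4-2\sqrt{N-1}}$ for $N\ge11$ and $p_{JL}=\infty$ for $3\le N\le10$. *)

theory Defs
  imports "HOL-Analysis.Analysis"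
begin

definition below_pJL :: "nat \<Rightarrow> real \<Rightarrow> bool" where
  "below_pJL N p \<longleftrightarrow>
     (N \<le> 10 \<or> p < 1 + 4 / (real N - 4 - 2 * sqrt (real N - 1)))"

definition singA :: "nat \<Rightarrow> real \<Rightarrow> real" where
  "singA N p = (2 / (p - 1) * (real N - 2 - 2 / (p - 1))) powr (1 / (p - 1))"

definition radial_solution :: "nat \<Rightarrow> real \<Rightarrow> real \<Rightarrow> (real \<Rightarrow> real) \<Rightarrow> bool" where
  "radial_solution N p lam u \<longleftrightarrow>
     (\<forall>r>0. (u has_real_derivative deriv u r) (at r) \<and>
            (deriv u has_real_derivative deriv (deriv u) r) (at r) \<and>
            deriv (deriv u) r + (real N - 1) / r * deriv u r + lam * u r
              + \<bar>u r\<bar> powr (p - 1) * u r = 0)"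

definition singular_at_origin :: "nat \<Rightarrow> real \<Rightarrow> (real \<Rightarrow> real) \<Rightarrow> bool" where
  "singular_at_origin N p u \<longleftrightarrow>
     ((\<lambda>r. u r / (singA N p * r powr (- 2 / (p - 1)))) \<longlongrightarrow> 1) (at_right 0)"

end

(*
  With m = (N - 1)/2, the function v = r^m u satisfies
  v'' + (lam - m (m - 1)/r^2 + |u|^(p-1)) v = 0, so wherever u > 0 and r is large we have
  v'' + (lam/2) v <= 0.  Comparing with sin (k (r - a)), k = sqrt (lam/2), through their
  Wronskian shows that v, hence u, cannot stay positive on any interval of length pi/k far out.
  The singular asymptotics make u positive near 0 (as A > 0 for p > N/(N-2)), and the first
  zero is the least point of the compact set where u <= 0 beyond a point of positivity.
*)
theory Submission
  imports Defs "HOL-Real_Asymp.Real_Asymp"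
begin

lemma has_real_derivative_powr_mult:
  fixes u :: "real \<Rightarrow> real"
  assumes "x > 0" and "(u has_real_derivative D) (at x)"
  shows "((\<lambda>y. y powr m * u y) has_real_derivative x powr m * (D + m / x * u x)) (at x)"
proof -
  have "((\<lambda>y. y powr m * u y) has_real_derivative m * x powr (m - 1) * u x + x powr m * D) (at x)"
    using assms by (auto intro!: derivative_eq_intros)
  then show ?thesis
    by (rule DERIV_cong) (use assms(1) in \<open>simp add: powr_diff field_simps\<close>)
qed

lemma has_real_derivative_powr_mult_second:
  fixes u u' :: "real \<Rightarrow> real"
  assumes "x > 0" and "(u has_real_derivative u' x) (at x)" and "(u' has_real_derivative D) (at x)"
  shows "((\<lambda>y. y powr m * (u' y + m / y * u y)) has_real_derivative
           x powr m * (D + 2 * m / x * u' x + m * (m - 1) / x\<^sup>2 * u x)) (at x)"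
proof -
  have "((\<lambda>y. y powr m * (u' y + m / y * u y)) has_real_derivative
          m * x powr (m - 1) * (u' x + m / x * u x)
          + x powr m * (D + (m * u' x * x - m * u x) / x\<^sup>2)) (at x)"
    using assms by (auto intro!: derivative_eq_intros simp: power2_eq_square)
  then show ?thesis
    by (rule DERIV_cong) (use assms(1) in \<open>simp add: powr_diff field_simps power2_eq_square\<close>)
qed

lemma sturm_sine_comparison:
  fixes v v' v'' :: "real \<Rightarrow> real"
  assumes k: "k > 0"
    and deriv: "\<And>x. a \<le> x \<Longrightarrow> x \<le> a + pi / k \<Longrightarrow>
      (v has_real_derivative v' x) (at x) \<and> (v' has_real_derivative v'' x) (at x)"
    and ineq: "\<And>x. a \<le> x \<Longrightarrow> x \<le> a + pi / k \<Longrightarrow> v x > 0 \<Longrightarrow> v'' x + k\<^sup>2 * v x \<le> 0"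
  shows "\<exists>x. a \<le> x \<and> x \<le> a + pi / k \<and> v x \<le> 0"
proof (rule ccontr)
  define b where "b = a + pi / k"
  assume "\<not> ?thesis"
  then have pos: "v x > 0" if "a \<le> x" "x \<le> b" for x
    using that by (force simp: b_def)
  have ab: "a \<le> b"
    using k by (simp add: b_def)
  \<comment> \<open>Wronskian of v with sin (k (x - a)), a solution of w'' + k^2 w = 0\<close>
  define W where "W x = v' x * sin (k * (x - a)) - k * v x * cos (k * (x - a))" for x
  have "W b \<le> W a"
  proof (rule DERIV_nonpos_imp_nonincreasing[OF ab])
    fix x assume x: "a \<le> x" "x \<le> b"
    have "(W has_real_derivative (v'' x + k\<^sup>2 * v x) * sin (k * (x - a))) (at x)"
      unfolding W_def using deriv[OF x[unfolded b_def]]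
      by (auto intro!: derivative_eq_intros simp: algebra_simps power2_eq_square)
    moreover have "sin (k * (x - a)) \<ge> 0"
    proof (rule sin_ge_zero)
      have "k * (x - a) \<le> k * (pi / k)"
        using k x by (intro mult_left_mono) (auto simp: b_def)
      then show "k * (x - a) \<le> pi"
        using k by simp
    qed (use k x in simp)
    ultimately show "\<exists>y. (W has_real_derivative y) (at x) \<and> y \<le> 0"
      using ineq[OF x[unfolded b_def] pos[OF x]] by (blast intro: mult_nonpos_nonneg)
  qed
  moreover have "W a < 0"
    using pos[OF order.refl ab] k by (simp add: W_def)
  moreover have "W b > 0"
    using pos[OF ab order.refl] k by (simp add: W_def b_def)
  ultimately show False
    by simp
qed

lemma radial_solution_liouville_transform:
  assumes sol: "radial_solution N p lam u" and x: "x > 0" and m: "m = (real N - 1) / 2"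
  shows "((\<lambda>y. y powr m * u y) has_real_derivative x powr m * (deriv u x + m / x * u x)) (at x)"
    and "((\<lambda>y. y powr m * (deriv u y + m / y * u y)) has_real_derivative
           x powr m * ((m * (m - 1) / x\<^sup>2 - lam) * u x - \<bar>u x\<bar> powr (p - 1) * u x)) (at x)"
proof -
  have m2: "2 * m = real N - 1"
    using m by simp
  have du: "(u has_real_derivative deriv u x) (at x)"
    and ddu: "(deriv u has_real_derivative deriv (deriv u) x) (at x)"
    and ode: "deriv (deriv u) x + 2 * m / x * deriv u x + lam * u x + \<bar>u x\<bar> powr (p - 1) * u x = 0"
    using sol x unfolding radial_solution_def m2 by auto
  show "((\<lambda>y. y powr m * u y) has_real_derivative x powr m * (deriv u x + m / x * u x)) (at x)"
    using has_real_derivative_powr_mult[OF x du] .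
  have "deriv (deriv u) x + 2 * m / x * deriv u x + m * (m - 1) / x\<^sup>2 * u x
      = (m * (m - 1) / x\<^sup>2 - lam) * u x - \<bar>u x\<bar> powr (p - 1) * u x"
    using ode by (simp add: algebra_simps)
  then show "((\<lambda>y. y powr m * (deriv u y + m / y * u y)) has_real_derivative
      x powr m * ((m * (m - 1) / x\<^sup>2 - lam) * u x - \<bar>u x\<bar> powr (p - 1) * u x)) (at x)"
    using has_real_derivative_powr_mult_second[where u' = "deriv u" and m = m, OF x du ddu] by simp
qed

lemma radial_solution_nonpos_beyond:
  assumes sol: "radial_solution N p lam u" and lam: "lam > 0"
  shows "\<exists>x\<ge>a. u x \<le> 0"
proof -
  define m where "m = (real N - 1) / 2"
  define k where "k = sqrt (lam / 2)"
  have k: "k > 0" "k\<^sup>2 = lam / 2"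
    using lam by (auto simp: k_def)
  have "((\<lambda>x. m * (m - 1) / x\<^sup>2) \<longlongrightarrow> 0) at_top"
    by real_asymp
  then have "\<forall>\<^sub>F x in at_top. m * (m - 1) / x\<^sup>2 < lam / 2"
    by (rule order_tendstoD) (use lam in simp)
  then obtain b where b: "\<And>x. x \<ge> b \<Longrightarrow> m * (m - 1) / x\<^sup>2 < lam / 2"
    unfolding eventually_at_top_linorder by blast
  define c where "c = max b (max a 1)"
  define v where "v y = y powr m * u y" for y
  define v' where "v' y = y powr m * (deriv u y + m / y * u y)" for y
  define v'' where "v'' y = y powr m * ((m * (m - 1) / y\<^sup>2 - lam) * u y - \<bar>u y\<bar> powr (p - 1) * u y)"
    for y
  have "\<exists>x. c \<le> x \<and> x \<le> c + pi / k \<and> v x \<le> 0"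
  proof (rule sturm_sine_comparison[OF k(1)])
    fix x assume "c \<le> x"
    then have "x > 0"
      by (simp add: c_def)
    then show "(v has_real_derivative v' x) (at x) \<and> (v' has_real_derivative v'' x) (at x)"
      unfolding v_def v'_def v''_def
      using radial_solution_liouville_transform[OF sol _ m_def] by blast
  next
    fix x assume "c \<le> x" and "v x > 0"
    then have "x > 0" "u x > 0" "m * (m - 1) / x\<^sup>2 < lam / 2"
      using b by (auto simp: c_def v_def zero_less_mult_iff)
    then have "(m * (m - 1) / x\<^sup>2 - lam / 2) * u x - \<bar>u x\<bar> powr (p - 1) * u x \<le> 0"
      by (smt (verit) mult_nonpos_nonneg powr_ge_zero zero_le_mult_iff)
    moreover have "v'' x + k\<^sup>2 * v x
        = x powr m * ((m * (m - 1) / x\<^sup>2 - lam / 2) * u x - \<bar>u x\<bar> powr (p - 1) * u x)"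
      by (simp add: v_def v''_def k(2) algebra_simps)
    ultimately show "v'' x + k\<^sup>2 * v x \<le> 0"
      by (simp only:) (rule mult_nonneg_nonpos; simp)
  qed
  then obtain x where "c \<le> x" "v x \<le> 0"
    by blast
  then show ?thesis
    by (intro exI[of _ x]) (auto simp: c_def v_def mult_le_0_iff)
qed

lemma singA_pos:
  assumes N: "real N > 2" and p: "real N / (real N - 2) < p"
  shows "singA N p > 0"
proof -
  have "1 < real N / (real N - 2)"
    using N by simp
  then have p1: "p - 1 > 0"
    using p by simp
  have "2 < (p - 1) * (real N - 2)"
    using p N by (simp add: field_simps)
  then have "2 / (p - 1) < real N - 2"
    using p1 by (simp add: field_simps)
  then have "2 / (p - 1) * (real N - 2 - 2 / (p - 1)) > 0"
    using p1 by simp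
  then show ?thesis
    unfolding singA_def by (simp only: powr_gt_zero)
qed

lemma singular_at_origin_eventually_pos:
  assumes "singA N p > 0" and "singular_at_origin N p u"
  shows "\<forall>\<^sub>F r in at_right 0. u r > 0"
proof -
  have "\<forall>\<^sub>F r in at_right 0. u r / (singA N p * r powr (- 2 / (p - 1))) > 0"
    using assms(2) unfolding singular_at_origin_def by (rule order_tendstoD) simp
  moreover have "\<forall>\<^sub>F r in at_right 0. r > (0::real)"
    by (simp add: eventually_at_right_less)
  ultimately show ?thesis
    by eventually_elim (use assms(1) in \<open>auto simp: zero_less_divide_iff mult_less_0_iff\<close>)
qed

lemma exists_first_zero:
  fixes f :: "real \<Rightarrow> real"
  assumes cont: "continuous_on {0<..} f" and pos: "\<forall>\<^sub>F r in at_right 0. f r > 0"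
    and x: "x > 0" "f x \<le> 0"
  shows "\<exists>r>0. f r = 0 \<and> (\<forall>s. 0 < s \<and> s < r \<longrightarrow> f s > 0)"
proof -
  obtain d where d: "d > 0" "\<And>s. 0 < s \<Longrightarrow> s < d \<Longrightarrow> f s > 0"
    using pos unfolding eventually_at_right_field by auto
  define c where "c = d / 2"
  have c: "c > 0" "f c > 0"
    using d by (auto simp: c_def)
  define Z where "Z = {c..x} \<inter> f -` {..0}"
  have "closed Z"
    unfolding Z_def
    by (intro continuous_closed_preimage continuous_on_subset[OF cont]) (use c in auto)
  moreover have "bounded Z"
    unfolding Z_def by (rule bounded_subset[of "{c..x}"]) auto
  ultimately have "compact Z"
    by (simp add: compact_eq_bounded_closed)
  moreover have "x \<in> Z"
    using c x d(2)[of x] by (force simp: Z_def c_def)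
  ultimately obtain r where r: "r \<in> Z" "\<And>z. z \<in> Z \<Longrightarrow> r \<le> z"
    using compact_attains_inf[of Z] by blast
  then have r_bounds: "c \<le> r" "r \<le> x" "f r \<le> 0"
    by (auto simp: Z_def)
  have "continuous_on {c..r} f"
    by (rule continuous_on_subset[OF cont]) (use c in auto)
  then obtain z where z: "c \<le> z" "z \<le> r" "f z = 0"
    using IVT2'[of f r 0 c] r_bounds c(2) by auto
  then have "z \<in> Z"
    using r_bounds by (simp add: Z_def)
  then have "z = r"
    using r(2) z(2) by (simp add: antisym)
  moreover have "f s > 0" if s: "0 < s" "s < r" for s
  proof (cases "s < d")
    case False
    then have "s \<in> {c..x}"
      using s r_bounds d(1) by (auto simp: c_def)
    moreover have "s \<notin> Z"
      using r(2) s(2) by force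
    ultimately show ?thesis
      by (auto simp: Z_def)
  qed (use d s in auto)
  ultimately show ?thesis
    using c(1) z by (intro exI[of _ r]) auto
qed

theorem proposition3p2:
  fixes N :: nat and p lam :: real and u :: "real \<Rightarrow> real"
  assumes "N \<ge> 3"
    and "(real N + 2) / (real N - 2) < p" and "below_pJL N p"
    and "lam > 0"
    and "radial_solution N p lam u"
    and "singular_at_origin N p u"
  shows "\<exists>r_star>0. u r_star = 0 \<and> (\<forall>r. 0 < r \<and> r < r_star \<longrightarrow> u r > 0)"
proof -
  \<comment> \<open>p < p_JL matters only for the existence and uniqueness of u_*, which here are hypotheses\<close>
  have N: "real N > 2"
    using assms(1) by simp
  then have "real N / (real N - 2) < (real N + 2) / (real N - 2)"
    by (intro divide_strict_right_mono) auto
  then have "singA N p > 0"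
    using singA_pos[OF N] assms(2) by simp
  then have pos: "\<forall>\<^sub>F r in at_right 0. u r > 0"
    using singular_at_origin_eventually_pos assms(6) by blast
  obtain x where x: "x \<ge> 1" "u x \<le> 0"
    using radial_solution_nonpos_beyond[OF assms(5,4)] by blast
  have "continuous_on {0<..} u"
    using assms(5) unfolding radial_solution_def
    by (intro continuous_at_imp_continuous_on) (auto dest: DERIV_isCont)
  from exists_first_zero[OF this pos _ x(2)] x(1) show ?thesis
    by simp
qed

end
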